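(* All zeros of $c$, $s$, $d$ lie on the three rays $\{-\zeta_2^{j}x: x\ge 0\}$, $j\in\{-1,0,1\}$ (the bisectors of the sectors $S_p=\{z:\frac{2\pi}{3}(p-1)<\arg z<\frac{2\pi p}{3}\}$, $p=1,2,3$). More precisely, the zero sets of $c,s,d$ are respectively $\{-\zeta_2^{j}x_c(k)\}$, $\{-\zeta_2^{j}x_s(k)\}$, $\{-\zeta_2^{j}x_d(k)\}$ ($j\in\{-1,0,1\}$, $k\ge1$), where $0<x_c(1)<x_c(2)<\dots$ are the positive roots of $\cos\frac{\sqrt3}{2}x=-\frac12e^{-\frac32x}$, $0=x_s(1)<x_s(2)<\dots$ are the nonnegative roots of $\sin\left(\frac{\sqrt3}{2}x+\frac\pi6\right)=\frac12e^{-\frac32x}$, and $0=x_d(1)<x_d(2)<\dots$ are the nonnegative roots of $\sin\left(\frac{\sqrt3}{2}x-\frac\pi6\right)=-\frac12e^{-\frac32x}$; all these roots of the respective real equations are simple. Moreover, the sequence $(x_d(k))$ interlaces with $(x_s(k))$, and $(x_s(k))$ interlaces with $(x_c(k))$.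
   Context: Let $\zeta_1=1$, $\zeta_2=-\frac12+\frac{\sqrt3}{2}i$, $\zeta_3=-\frac12-\frac{\sqrt3}{2}i$ be the cube roots of unity. For $z\in\mathbb C$ define $c(z)=\frac13\sum_{k=1}^3 e^{z\zeta_k}$, $s(z)=\frac13\sum_{k=1}^3\zeta_k^{-1}e^{z\zeta_k}$, $d(z)=\frac13\sum_{k=1}^3\zeta_k^{-2}e^{z\zeta_k}$. *)

theory Defs
  imports "HOL-Analysis.Analysis"
begin

definition zeta1 :: complex where "zeta1 = 1"
definition zeta2 :: complex where "zeta2 = - 1/2 + (sqrt 3 / 2) * \<i>"
definition zeta3 :: complex where "zeta3 = - 1/2 - (sqrt 3 / 2) * \<i>"

definition zetas :: "nat \<Rightarrow> complex" where
  "zetas k = (if k = 1 then zeta1 else if k = 2 then zeta2 else zeta3)"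

definition cfun :: "complex \<Rightarrow> complex" where
  "cfun z = (1/3) * (\<Sum>k\<in>{1..3::nat}. exp (z * zetas k))"
definition sfun :: "complex \<Rightarrow> complex" where
  "sfun z = (1/3) * (\<Sum>k\<in>{1..3::nat}. inverse (zetas k) * exp (z * zetas k))"
definition dfun :: "complex \<Rightarrow> complex" where
  "dfun z = (1/3) * (\<Sum>k\<in>{1..3::nat}. inverse (zetas k ^ 2) * exp (z * zetas k))"

definition Fc :: "real \<Rightarrow> real" where
  "Fc x = cos (sqrt 3 / 2 * x) - (- (1/2) * exp (- (3/2) * x))"
definition Fs :: "real \<Rightarrow> real" where
  "Fs x = sin (sqrt 3 / 2 * x + pi / 6) - (1/2) * exp (- (3/2) * x)"
definition Fd :: "real \<Rightarrow> real" where
  "Fd x = sin (sqrt 3 / 2 * x - pi / 6) - (- (1/2) * exp (- (3/2) * x))"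

end

theory Submission
  imports Defs
begin

text \<open>
  Multiplying by \<open>3 exp (z/2)\<close> turns \<open>c\<close>, \<open>s\<close>, \<open>d\<close> into
  \<open>H\<^sub>g z = exp (3z/2) + 2 cos (sqrt 3 z / 2 + g)\<close> with \<open>g = 0, -2\<pi>/3, 2\<pi>/3\<close>, and on the negative
  real axis \<open>H\<^sub>g (-x) = 2 F\<^sub>g x\<close> with \<open>F\<^sub>g x = cos (sqrt 3 x / 2 - g) + exp (-3x/2) / 2\<close>;
  up to sign, \<open>F\<^sub>g\<close> is \<open>Fc\<close>, \<open>Fs\<close>, \<open>Fd\<close>. The three functions are eigenfunctions of the rotation
  \<open>z \<mapsto> \<zeta>\<^sub>2 z\<close>, and every \<open>z \<noteq> 0\<close> can be rotated into the half plane \<open>Re z < 0\<close>. There a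
  zero of \<open>H\<^sub>g\<close> must be real: the real part of \<open>H\<^sub>g z = 0\<close> makes the cosine of the phase small,
  and then the imaginary part is dominated by its \<open>sinh\<close> term.

  A positive root \<open>x\<close> of \<open>F\<^sub>g\<close> satisfies \<open>\<bar>cos (sqrt 3 x / 2 - g)\<bar> < 1/2\<close>, so its phase lies in
  a window \<open>(\<pi>n - 2\<pi>/3, \<pi>n - \<pi>/3)\<close>. On each such window \<open>F\<^sub>g\<close> changes sign and its derivative
  has no zero, so every window in \<open>x \<ge> 0\<close> holds exactly one root. Listing the windows gives the
  three root sequences, their simplicity and their interlacing.
\<close>

section \<open>The real equations\<close>

definition Fphase :: "real \<Rightarrow> real \<Rightarrow> real" where
  "Fphase g x = cos (sqrt 3 / 2 * x - g) + exp (- (3/2) * x) / 2"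

lemma Fc_eq_Fphase: "Fc = Fphase 0"
  by (simp add: fun_eq_iff Fc_def Fphase_def)

lemma Fs_eq_Fphase: "Fs = (\<lambda>x. - Fphase (- (2*pi/3)) x)"
proof
  fix x
  have "sqrt 3 / 2 * x - - (2*pi/3) = (sqrt 3 / 2 * x + pi/6) + pi/2"
    by simp
  then have "cos (sqrt 3 / 2 * x - - (2*pi/3)) = - sin (sqrt 3 / 2 * x + pi/6)"
    by (simp only: cos_add) simp
  then show "Fs x = - Fphase (- (2*pi/3)) x"
    by (simp add: Fs_def Fphase_def)
qed

lemma Fd_eq_Fphase: "Fd = Fphase (2*pi/3)"
proof
  fix x
  have "sqrt 3 / 2 * x - 2*pi/3 = (sqrt 3 / 2 * x - pi/6) - pi/2"
    by simp
  then have "cos (sqrt 3 / 2 * x - 2*pi/3) = sin (sqrt 3 / 2 * x - pi/6)"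
    by (simp only: cos_diff) simp
  then show "Fd x = Fphase (2*pi/3) x"
    by (simp add: Fd_def Fphase_def)
qed

lemma Fphase_at_0: "Fphase 0 0 = 3/2" "Fphase (- (2*pi/3)) 0 = 0" "Fphase (2*pi/3) 0 = 0"
  by (simp_all add: Fphase_def cos_120)

lemma has_real_derivative_Fphase:
  "(Fphase g has_real_derivative
      - (sqrt 3 / 2) * sin (sqrt 3 / 2 * x - g) - 3/4 * exp (- (3/2) * x)) (at x)"
  unfolding Fphase_def by (auto intro!: derivative_eq_intros simp: algebra_simps)

lemma deriv_Fphase:
  "deriv (Fphase g) x = - (sqrt 3 / 2) * sin (sqrt 3 / 2 * x - g) - 3/4 * exp (- (3/2) * x)"
  using has_real_derivative_Fphase by (rule DERIV_imp_deriv)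

lemma continuous_on_Fphase: "continuous_on S (Fphase g)"
  unfolding Fphase_def by (intro continuous_intros) simp_all

text \<open>Where the cosine is at most \<open>1/2\<close> in modulus, the sine is at least \<open>sqrt 3 / 2\<close>, so the
  oscillating part of the derivative has modulus at least \<open>3/4\<close>, more than the exponential part
  has for \<open>x > 0\<close>.\<close>
lemma deriv_Fphase_nonzero:
  assumes "0 < x" "\<bar>cos (sqrt 3 / 2 * x - g)\<bar> \<le> 1/2"
  shows "deriv (Fphase g) x \<noteq> 0"
proof
  define e where "e = exp (- (3/2) * x)"
  assume "deriv (Fphase g) x = 0"
  then have "sqrt 3 * sin (sqrt 3 / 2 * x - g) = - (3/2) * e"
    by (simp add: deriv_Fphase e_def field_simps)
  then have "(sqrt 3 * sin (sqrt 3 / 2 * x - g)) ^ 2 = (3/2 * e) ^ 2"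
    by simp
  then have "3 * sin (sqrt 3 / 2 * x - g) ^ 2 = 9/4 * e ^ 2"
    by (simp add: power_mult_distrib power_divide)
  moreover have "e ^ 2 < 1"
    using assms(1) by (simp add: e_def power_less_one_iff)
  moreover have "sin (sqrt 3 / 2 * x - g) ^ 2 + cos (sqrt 3 / 2 * x - g) ^ 2 = 1"
    by simp
  moreover have "cos (sqrt 3 / 2 * x - g) ^ 2 \<le> 1/4"
    using power_mono[OF assms(2) abs_ge_zero, of 2] by (simp add: power_divide)
  ultimately show False
    by linarith
qed

lemma Fphase_root_abs_cos:
  assumes "0 < x" "Fphase g x = 0"
  shows "\<bar>cos (sqrt 3 / 2 * x - g)\<bar> < 1/2"
proof -
  have "cos (sqrt 3 / 2 * x - g) = - exp (- (3/2) * x) / 2"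
    using assms(2) by (simp add: Fphase_def)
  moreover have "exp (- (3/2) * x) < 1"
    using assms(1) by simp
  ultimately show ?thesis
    by simp
qed

lemma Fphase_root_simple:
  assumes "0 < x" "Fphase g x = 0"
  shows "deriv (Fphase g) x \<noteq> 0"
  using deriv_Fphase_nonzero Fphase_root_abs_cos[OF assms] assms(1) by simp

lemma deriv_Fs: "deriv Fs x = - deriv (Fphase (- (2*pi/3))) x"
  unfolding Fs_eq_Fphase
  by (rule deriv_minus) (use has_real_derivative_Fphase in \<open>auto simp: field_differentiable_def\<close>)

lemma deriv_Fs_at_0: "deriv Fs 0 = 3/2"
proof -
  have "sin (2*pi/3) = sqrt 3 / 2"
    using sin_120' by (simp add: mult.commute)
  then have "sqrt 3 * sin (2*pi/3) = 3/2"
    by (subst \<open>sin (2*pi/3) = sqrt 3 / 2\<close>) simp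
  then show ?thesis
    by (simp add: deriv_Fs deriv_Fphase)
qed

lemma Fs_root_simple:
  assumes "0 \<le> x" "Fs x = 0"
  shows "deriv Fs x \<noteq> 0"
proof (cases "x = 0")
  case True
  then show ?thesis
    by (simp add: deriv_Fs_at_0)
next
  case False
  with assms have "0 < x" "Fphase (- (2*pi/3)) x = 0"
    by (simp_all add: Fs_eq_Fphase)
  then show ?thesis
    using Fphase_root_simple by (simp add: deriv_Fs)
qed

section \<open>One root per window\<close>

lemma abs_cos_add_pi_int: "\<bar>cos (t + pi * of_int m)\<bar> = \<bar>cos t\<bar>"
  by (simp add: cos_add)

lemma abs_cos_le_half_window:
  fixes n :: int
  assumes "t \<in> {pi * n - 2*pi/3 .. pi * n - pi/3}"
  shows "\<bar>cos t\<bar> \<le> 1/2"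
proof -
  define s where "s = t - pi * of_int (n - 1)"
  have s: "pi/3 \<le> s" "s \<le> 2*pi/3"
    using assms by (auto simp: s_def algebra_simps)
  have "cos s \<le> cos (pi/3)" "cos (2*pi/3) \<le> cos s"
    using s by (auto intro!: cos_monotone_0_pi_le)
  then have "\<bar>cos s\<bar> \<le> 1/2"
    by (simp add: cos_60 cos_120 abs_le_iff)
  then show ?thesis
    using abs_cos_add_pi_int[of s "n - 1"] by (simp add: s_def)
qed

lemma abs_cos_window_endpoints:
  fixes n :: int
  shows "\<bar>cos (pi * n - 2*pi/3)\<bar> = 1/2" "\<bar>cos (pi * n - pi/3)\<bar> = 1/2"
  by (simp_all add: cos_diff cos_120 cos_60)

lemma abs_cos_less_half_window:
  assumes "\<bar>cos t\<bar> < 1/2"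
  obtains n :: int where "t \<in> {pi * n - 2*pi/3 <..< pi * n - pi/3}"
proof -
  define k where "k = \<lfloor>t / pi\<rfloor>"
  define s where "s = t - pi * of_int k"
  have "of_int k \<le> t / pi" "t / pi < of_int k + 1"
    unfolding k_def by linarith+
  then have s: "0 \<le> s" "s < pi"
    by (auto simp: s_def field_simps)
  have cos_s: "\<bar>cos s\<bar> < 1/2"
    using assms abs_cos_add_pi_int[of s k] by (simp add: s_def)
  have "pi/3 < s"
  proof (rule ccontr)
    assume "\<not> pi/3 < s"
    then have "cos (pi/3) \<le> cos s"
      using s by (intro cos_monotone_0_pi_le) auto
    then show False
      using cos_s by (simp add: cos_60)
  qed
  moreover have "s < 2*pi/3"
  proof (rule ccontr)
    assume "\<not> s < 2*pi/3"
    then have "cos s \<le> cos (2*pi/3)"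
      using s by (intro cos_monotone_0_pi_le) auto
    then show False
      using cos_s by (simp add: cos_120)
  qed
  ultimately show ?thesis
    by (intro that[of "k + 1"]) (auto simp: s_def algebra_simps)
qed

lemma window_root_exists:
  fixes n :: int
  assumes "0 \<le> pi * n - 2*pi/3 + g"
  shows "\<exists>x. sqrt 3 / 2 * x - g \<in> {pi * n - 2*pi/3 .. pi * n - pi/3} \<and> Fphase g x = 0"
proof -
  define a where "a = 2 / sqrt 3 * (pi * n - 2*pi/3 + g)"
  define b where "b = 2 / sqrt 3 * (pi * n - pi/3 + g)"
  have phase: "sqrt 3 / 2 * a - g = pi * n - 2*pi/3" "sqrt 3 / 2 * b - g = pi * n - pi/3"
    by (simp_all add: a_def b_def field_simps)
  have "0 \<le> a"
    using assms by (simp add: a_def)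
  have "a < b"
    unfolding a_def b_def by (rule mult_strict_left_mono) simp_all
  then have exp_ab: "exp (- (3/2) * a) \<le> 1" "exp (- (3/2) * b) < 1"
    using \<open>0 \<le> a\<close> by simp_all
  have Fab: "Fphase g a = - (if even n then 1 else -1) / 2 + exp (- (3/2) * a) / 2"
    "Fphase g b = (if even n then 1 else -1) / 2 + exp (- (3/2) * b) / 2"
    unfolding Fphase_def phase by (simp_all add: cos_diff cos_120 cos_60)
  have "\<exists>x. a \<le> x \<and> x \<le> b \<and> Fphase g x = 0"
  proof (cases "even n")
    case True
    then show ?thesis
      using exp_ab Fab \<open>a < b\<close> by (intro IVT' continuous_on_Fphase) simp_all
  next
    case False
    then show ?thesis
      using exp_ab Fab \<open>a < b\<close> by (intro IVT2' continuous_on_Fphase) simp_all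
  qed
  then obtain x where "a \<le> x" "x \<le> b" "Fphase g x = 0"
    by blast
  moreover from \<open>a \<le> x\<close> \<open>x \<le> b\<close> have "sqrt 3 / 2 * x - g \<in> {pi * n - 2*pi/3 .. pi * n - pi/3}"
    by (simp flip: phase)
  ultimately show ?thesis
    by blast
qed

lemma window_root_unique:
  fixes n :: int
  assumes "0 \<le> pi * n - 2*pi/3 + g"
    and "sqrt 3 / 2 * x - g \<in> {pi * n - 2*pi/3 .. pi * n - pi/3}" "Fphase g x = 0"
    and "sqrt 3 / 2 * y - g \<in> {pi * n - 2*pi/3 .. pi * n - pi/3}" "Fphase g y = 0"
  shows "x = y"
proof -
  have False if "u < v"
    and u: "sqrt 3 / 2 * u - g \<in> {pi * n - 2*pi/3 .. pi * n - pi/3}" "Fphase g u = 0"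
    and v: "sqrt 3 / 2 * v - g \<in> {pi * n - 2*pi/3 .. pi * n - pi/3}" "Fphase g v = 0"
    for u v
  proof -
    obtain z where z: "u < z" "z < v" "DERIV (Fphase g) z :> 0"
      using Rolle[OF \<open>u < v\<close>] u(2) v(2) continuous_on_Fphase has_real_derivative_Fphase
      by (metis real_differentiable_def)
    have "0 \<le> sqrt 3 / 2 * u"
      using u(1) assms(1) by auto
    then have "0 \<le> u"
      by (simp add: zero_le_mult_iff)
    moreover have "sqrt 3 / 2 * u \<le> sqrt 3 / 2 * z" "sqrt 3 / 2 * z \<le> sqrt 3 / 2 * v"
      using z(1,2) by simp_all
    then have "sqrt 3 / 2 * z - g \<in> {pi * n - 2*pi/3 .. pi * n - pi/3}"
      using u(1) v(1) by (simp_all only: atLeastAtMost_iff) linarith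
    ultimately have "deriv (Fphase g) z \<noteq> 0"
      using z(1) by (intro deriv_Fphase_nonzero abs_cos_le_half_window) auto
    with z(3) show False
      using DERIV_imp_deriv by blast
  qed
  then show ?thesis
    using assms(2-5) by (metis linorder_neq_iff)
qed

text \<open>Meaningful only when the window lies in \<open>x \<ge> 0\<close>, where it contains exactly one root.\<close>
definition window_root :: "real \<Rightarrow> int \<Rightarrow> real" where
  "window_root g n =
     (THE x. sqrt 3 / 2 * x - g \<in> {pi * n - 2*pi/3 .. pi * n - pi/3} \<and> Fphase g x = 0)"

lemma window_root:
  fixes n :: int
  assumes "0 \<le> pi * n - 2*pi/3 + g"
  shows "sqrt 3 / 2 * window_root g n - g \<in> {pi * n - 2*pi/3 .. pi * n - pi/3}"
    and "Fphase g (window_root g n) = 0"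
proof -
  have "\<exists>!x. sqrt 3 / 2 * x - g \<in> {pi * n - 2*pi/3 .. pi * n - pi/3} \<and> Fphase g x = 0"
    using window_root_exists[OF assms] window_root_unique[OF assms] by blast
  from theI'[OF this] show "sqrt 3 / 2 * window_root g n - g \<in> {pi * n - 2*pi/3 .. pi * n - pi/3}"
    and "Fphase g (window_root g n) = 0"
    unfolding window_root_def by blast+
qed

lemma window_root_eqI:
  fixes n :: int
  assumes "0 \<le> pi * n - 2*pi/3 + g"
    and "sqrt 3 / 2 * x - g \<in> {pi * n - 2*pi/3 .. pi * n - pi/3}" "Fphase g x = 0"
  shows "window_root g n = x"
  using window_root_unique[OF assms(1) window_root[OF assms(1)] assms(2,3)] .

lemma positive_root_in_window:
  assumes "0 < x" "Fphase g x = 0"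
  obtains n :: int where "sqrt 3 / 2 * x - g \<in> {pi * n - 2*pi/3 <..< pi * n - pi/3}"
  using abs_cos_less_half_window[OF Fphase_root_abs_cos[OF assms]] by blast

lemma positive_root_window_interior:
  fixes n :: int
  assumes "0 < x" "Fphase g x = 0"
    and "sqrt 3 / 2 * x - g \<in> {pi * n - 2*pi/3 .. pi * n - pi/3}"
  shows "sqrt 3 / 2 * x - g \<in> {pi * n - 2*pi/3 <..< pi * n - pi/3}"
  using assms(3) Fphase_root_abs_cos[OF assms(1,2)] abs_cos_window_endpoints[of n]
  by (auto simp: less_le)

lemma positive_root_eq_window_root:
  assumes "0 < x" "Fphase g x = 0"
  obtains n :: int where "0 < pi * n - pi/3 + g"
    and "0 \<le> pi * n - 2*pi/3 + g \<Longrightarrow> window_root g n = x"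
proof -
  obtain n :: int where n: "sqrt 3 / 2 * x - g \<in> {pi * n - 2*pi/3 <..< pi * n - pi/3}"
    using positive_root_in_window[OF assms] .
  have "0 < sqrt 3 / 2 * x"
    using assms(1) by simp
  with n have "0 < pi * n - pi/3 + g"
    by auto
  moreover have "window_root g n = x" if "0 \<le> pi * n - 2*pi/3 + g"
    using window_root_eqI[OF that _ assms(2)] n by simp
  ultimately show thesis
    using that by blast
qed

lemma strict_mono_on_window_sequence:
  fixes h :: "nat \<Rightarrow> real"
  assumes "\<And>m. 1 \<le> m \<Longrightarrow> pi * m + a \<le> sqrt 3 / 2 * h m"
    and "\<And>m. 1 \<le> m \<Longrightarrow> sqrt 3 / 2 * h m \<le> pi * m + a + pi/3"
  shows "strict_mono_on {1..} h"
proof (rule strict_mono_onI)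
  fix m n :: nat
  assume "m \<in> {1..}" "n \<in> {1..}" "m < n"
  then have "1 \<le> m" "1 \<le> n"
    by auto
  have "pi * m + pi \<le> pi * n"
    using \<open>m < n\<close> mult_left_mono[of "real m + 1" "real n" pi] by (simp add: algebra_simps)
  then have "sqrt 3 / 2 * h m < sqrt 3 / 2 * h n"
    using assms(2)[OF \<open>1 \<le> m\<close>] assms(1)[OF \<open>1 \<le> n\<close>] pi_gt_zero by linarith
  then show "h m < h n"
    by simp
qed

definition c_root :: "nat \<Rightarrow> real" where
  "c_root m = window_root 0 (int m)"

text \<open>The root \<open>0\<close> of \<open>Fs\<close> is the right end of window \<open>1\<close>, which reaches into \<open>x < 0\<close>;
  hence it is listed separately.\<close>
definition s_root :: "nat \<Rightarrow> real" where
  "s_root m = (if m = 1 then 0 else window_root (- (2*pi/3)) (int m))"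

definition d_root :: "nat \<Rightarrow> real" where
  "d_root m = window_root (2*pi/3) (int m - 1)"

lemma c_root:
  assumes "1 \<le> m"
  shows "pi * m - 2*pi/3 < sqrt 3 / 2 * c_root m" "sqrt 3 / 2 * c_root m < pi * m - pi/3"
    and "Fphase 0 (c_root m) = 0" "0 < c_root m"
proof -
  have "pi/3 \<le> pi * int m - 2*pi/3"
    using assms mult_left_mono[of 1 "real m" pi] by simp
  then have "0 \<le> pi * int m - 2*pi/3 + 0"
    by simp
  note window = window_root[OF this, folded c_root_def]
  have "0 < sqrt 3 / 2 * c_root m"
    using window(1) \<open>pi/3 \<le> pi * int m - 2*pi/3\<close> pi_gt_zero
    unfolding atLeastAtMost_iff by linarith
  then show "0 < c_root m"
    by (simp add: zero_less_mult_iff)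
  from positive_root_window_interior[OF this window(2,1)] window(2)
  show "pi * m - 2*pi/3 < sqrt 3 / 2 * c_root m" "sqrt 3 / 2 * c_root m < pi * m - pi/3"
    and "Fphase 0 (c_root m) = 0"
    by simp_all
qed

lemma s_root:
  assumes "1 \<le> m"
  shows "pi * m - 4*pi/3 \<le> sqrt 3 / 2 * s_root m" "sqrt 3 / 2 * s_root m \<le> pi * m - pi"
    and "Fphase (- (2*pi/3)) (s_root m) = 0" "0 \<le> s_root m"
proof -
  have "pi * m - 4*pi/3 \<le> sqrt 3 / 2 * s_root m \<and> sqrt 3 / 2 * s_root m \<le> pi * m - pi
    \<and> Fphase (- (2*pi/3)) (s_root m) = 0 \<and> 0 \<le> s_root m"
  proof (cases "m = 1")
    case True
    then show ?thesis
      by (simp add: s_root_def Fphase_at_0)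
  next
    case False
    then have "pi * 2 \<le> pi * m"
      using assms by (intro mult_left_mono) auto
    then have "0 \<le> pi * int m - 2*pi/3 + - (2*pi/3)"
      by simp
    note window = window_root[OF this, folded s_root_def]
    have "0 \<le> sqrt 3 / 2 * window_root (- (2*pi/3)) (int m)"
      using window(1) \<open>pi * 2 \<le> pi * m\<close> unfolding atLeastAtMost_iff by linarith
    with window False show ?thesis
      by (simp add: s_root_def zero_le_mult_iff)
  qed
  then show "pi * m - 4*pi/3 \<le> sqrt 3 / 2 * s_root m" "sqrt 3 / 2 * s_root m \<le> pi * m - pi"
    and "Fphase (- (2*pi/3)) (s_root m) = 0" "0 \<le> s_root m"
    by auto
qed

lemma d_root:
  assumes "1 \<le> m"
  shows "pi * m - pi \<le> sqrt 3 / 2 * d_root m" "sqrt 3 / 2 * d_root m \<le> pi * m - 2*pi/3"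
    and "Fphase (2*pi/3) (d_root m) = 0" "0 \<le> d_root m"
proof -
  have "0 \<le> pi * (int m - 1) - 2*pi/3 + 2*pi/3"
    using assms by simp
  note window = window_root[OF this, folded d_root_def]
  then show lower: "pi * m - pi \<le> sqrt 3 / 2 * d_root m"
    and "sqrt 3 / 2 * d_root m \<le> pi * m - 2*pi/3" "Fphase (2*pi/3) (d_root m) = 0"
    by (simp_all add: algebra_simps)
  have "pi * 1 \<le> pi * m"
    using assms by (intro mult_left_mono) auto
  with lower have "0 \<le> sqrt 3 / 2 * d_root m"
    by linarith
  then show "0 \<le> d_root m"
    by (simp add: zero_le_mult_iff)
qed

lemma d_root_1: "d_root 1 = 0"
  unfolding d_root_def using Fphase_at_0(3) by (intro window_root_eqI) auto

lemma c_root_image: "c_root ` {1..} = {x. 0 < x \<and> Fphase 0 x = 0}"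
proof (intro set_eqI iffI)
  fix x
  assume "x \<in> c_root ` {1..}"
  then show "x \<in> {x. 0 < x \<and> Fphase 0 x = 0}"
    using c_root by auto
next
  fix x
  assume "x \<in> {x. 0 < x \<and> Fphase 0 x = 0}"
  then obtain n :: int where n: "0 < pi * n - pi/3 + 0"
    and root: "0 \<le> pi * n - 2*pi/3 + 0 \<Longrightarrow> window_root 0 n = x"
    using positive_root_eq_window_root by blast
  then have "pi * (1/3) < pi * n"
    by linarith
  then have "1/3 < real_of_int n"
    by (simp only: mult_less_cancel_left_pos[OF pi_gt_zero])
  then have "1 \<le> n"
    by linarith
  moreover have "pi * 1 \<le> pi * n"
    using \<open>1 \<le> n\<close> by (intro mult_left_mono) auto
  ultimately have "c_root (nat n) = x"
    using root pi_gt_zero by (simp add: c_root_def)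
  with \<open>1 \<le> n\<close> show "x \<in> c_root ` {1..}"
    by (intro image_eqI[of _ _ "nat n"]) auto
qed

lemma s_root_image: "s_root ` {1..} = {x. 0 \<le> x \<and> Fphase (- (2*pi/3)) x = 0}"
proof (intro set_eqI iffI)
  fix x
  assume "x \<in> s_root ` {1..}"
  then obtain m where "1 \<le> m" "x = s_root m"
    by auto
  then show "x \<in> {x. 0 \<le> x \<and> Fphase (- (2*pi/3)) x = 0}"
    using s_root(3,4) by simp
next
  fix x
  assume "x \<in> {x. 0 \<le> x \<and> Fphase (- (2*pi/3)) x = 0}"
  then have x: "0 \<le> x" "Fphase (- (2*pi/3)) x = 0"
    by auto
  show "x \<in> s_root ` {1..}"
  proof (cases "x = 0")
    case True
    then show ?thesis
      by (intro image_eqI[of _ _ 1]) (auto simp: s_root_def)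
  next
    case False
    with x have "0 < x"
      by simp
    then obtain n :: int where n: "0 < pi * n - pi/3 + - (2*pi/3)"
      and root: "0 \<le> pi * n - 2*pi/3 + - (2*pi/3) \<Longrightarrow> window_root (- (2*pi/3)) n = x"
      using positive_root_eq_window_root[OF _ x(2)] by blast
    then have "pi * 1 < pi * n"
      by linarith
    then have "1 < real_of_int n"
      by (simp only: mult_less_cancel_left_pos[OF pi_gt_zero])
    then have "2 \<le> n"
      by linarith
    moreover have "pi * 2 \<le> pi * n"
      using \<open>2 \<le> n\<close> by (intro mult_left_mono) auto
    ultimately have "s_root (nat n) = x"
      using root pi_gt_zero by (simp add: s_root_def)
    with \<open>2 \<le> n\<close> show ?thesis
      by (intro image_eqI[of _ _ "nat n"]) auto
  qed
qed

lemma d_root_image: "d_root ` {1..} = {x. 0 \<le> x \<and> Fphase (2*pi/3) x = 0}"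
proof (intro set_eqI iffI)
  fix x
  assume "x \<in> d_root ` {1..}"
  then obtain m where "1 \<le> m" "x = d_root m"
    by auto
  then show "x \<in> {x. 0 \<le> x \<and> Fphase (2*pi/3) x = 0}"
    using d_root(3,4) by simp
next
  fix x
  assume "x \<in> {x. 0 \<le> x \<and> Fphase (2*pi/3) x = 0}"
  then have x: "0 \<le> x" "Fphase (2*pi/3) x = 0"
    by auto
  show "x \<in> d_root ` {1..}"
  proof (cases "x = 0")
    case True
    then show ?thesis
      using d_root_1 by (intro image_eqI[of _ _ 1]) auto
  next
    case False
    with x have "0 < x"
      by simp
    then obtain n :: int where n: "0 < pi * n - pi/3 + 2*pi/3"
      and root: "0 \<le> pi * n - 2*pi/3 + 2*pi/3 \<Longrightarrow> window_root (2*pi/3) n = x"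
      using positive_root_eq_window_root[OF _ x(2)] by blast
    then have "pi * (- 1/3) < pi * n"
      by linarith
    then have "- 1/3 < real_of_int n"
      by (simp only: mult_less_cancel_left_pos[OF pi_gt_zero])
    then have "0 \<le> n"
      by linarith
    with root have "window_root (2*pi/3) n = x"
      by simp
    moreover have "n \<noteq> 0"
      using d_root_1 \<open>window_root (2*pi/3) n = x\<close> False by (auto simp: d_root_def)
    ultimately have "d_root (nat n + 1) = x"
      using \<open>0 \<le> n\<close> by (simp add: d_root_def)
    then show ?thesis
      by (intro image_eqI[of _ _ "nat n + 1"]) auto
  qed
qed

lemma strict_mono_on_c_root: "strict_mono_on {1..} c_root"
proof (rule strict_mono_on_window_sequence[where a = "- (2*pi/3)"])
  fix m :: nat
  assume "1 \<le> m"
  from c_root(1,2)[OF this]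
  show "pi * m + - (2*pi/3) \<le> sqrt 3 / 2 * c_root m"
    and "sqrt 3 / 2 * c_root m \<le> pi * m + - (2*pi/3) + pi/3"
    by linarith+
qed

lemma strict_mono_on_s_root: "strict_mono_on {1..} s_root"
proof (rule strict_mono_on_window_sequence[where a = "- (4*pi/3)"])
  fix m :: nat
  assume "1 \<le> m"
  from s_root(1,2)[OF this]
  show "pi * m + - (4*pi/3) \<le> sqrt 3 / 2 * s_root m"
    and "sqrt 3 / 2 * s_root m \<le> pi * m + - (4*pi/3) + pi/3"
    by linarith+
qed

lemma strict_mono_on_d_root: "strict_mono_on {1..} d_root"
proof (rule strict_mono_on_window_sequence[where a = "- pi"])
  fix m :: nat
  assume "1 \<le> m"
  from d_root(1,2)[OF this]
  show "pi * m + - pi \<le> sqrt 3 / 2 * d_root m"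
    and "sqrt 3 / 2 * d_root m \<le> pi * m + - pi + pi/3"
    by linarith+
qed

lemma s_root_c_root_interlace:
  assumes "1 \<le> k"
  shows "s_root k < c_root k" "c_root k < s_root (Suc k)"
proof -
  have "pi * real (Suc k) = pi * k + pi"
    by (simp add: algebra_simps)
  moreover have "1 \<le> Suc k"
    by simp
  ultimately have "sqrt 3 / 2 * c_root k < sqrt 3 / 2 * s_root (Suc k)"
    using c_root(2)[OF assms] s_root(1)[of "Suc k"] by linarith
  moreover have "sqrt 3 / 2 * s_root k < sqrt 3 / 2 * c_root k"
    using s_root(2)[OF assms] c_root(1)[OF assms] pi_gt_zero by linarith
  ultimately show "s_root k < c_root k" "c_root k < s_root (Suc k)"
    by simp_all
qed

lemma s_root_d_root_interlace:
  assumes "1 \<le> k"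
  shows "s_root k \<le> d_root k" "d_root k < s_root (Suc k)"
proof -
  have "pi * real (Suc k) = pi * k + pi"
    by (simp add: algebra_simps)
  moreover have "1 \<le> Suc k"
    by simp
  ultimately have "sqrt 3 / 2 * d_root k < sqrt 3 / 2 * s_root (Suc k)"
    using d_root(2)[OF assms] s_root(1)[of "Suc k"] pi_gt_zero by linarith
  moreover have "sqrt 3 / 2 * s_root k \<le> sqrt 3 / 2 * d_root k"
    using s_root(2)[OF assms] d_root(1)[OF assms] by linarith
  ultimately show "s_root k \<le> d_root k" "d_root k < s_root (Suc k)"
    by simp_all
qed

section \<open>Zeros of \<open>c\<close>, \<open>s\<close> and \<open>d\<close>\<close>

lemma zeta2_mult_zeta3: "zeta2 * zeta3 = 1"
  by (simp add: zeta2_def zeta3_def complex_eq_iff algebra_simps)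

lemma zeta2_squared: "zeta2 * zeta2 = zeta3"
  by (simp add: zeta2_def zeta3_def complex_eq_iff algebra_simps)

lemma zeta3_squared: "zeta3 * zeta3 = zeta2"
  by (simp add: zeta2_def zeta3_def complex_eq_iff algebra_simps)

lemma inverse_zeta2: "inverse zeta2 = zeta3"
  using zeta2_mult_zeta3 by (rule inverse_unique)

lemma inverse_zeta3: "inverse zeta3 = zeta2"
  using zeta2_mult_zeta3 by (simp add: inverse_unique mult.commute)

lemma zeta2_nonzero: "zeta2 \<noteq> 0"
  using zeta2_mult_zeta3 by auto

lemma zeta3_nonzero: "zeta3 \<noteq> 0"
  using zeta2_mult_zeta3 by auto

lemma zeta2_powi_minus_one: "zeta2 powi (-1) = zeta3"
  by (simp add: power_int_minus inverse_zeta2)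

lemma cis_two_pi_thirds: "cis (2*pi/3) = zeta2" "cis (- (2*pi/3)) = zeta3"
  using cos_120 sin_120' by (simp_all add: zeta2_def zeta3_def complex_eq_iff mult.commute)

lemma sum_atLeastAtMost_1_3: "(\<Sum>k\<in>{1..3::nat}. f k) = f 1 + f 2 + f 3"
proof -
  have "{1..3::nat} = {1, 2, 3}"
    by auto
  then show ?thesis
    by (simp add: add.assoc)
qed

lemma cfun_altdef: "cfun z = (exp z + exp (z * zeta2) + exp (z * zeta3)) / 3"
  unfolding cfun_def sum_atLeastAtMost_1_3
  by (simp add: zetas_def zeta1_def)

lemma sfun_altdef: "sfun z = (exp z + zeta3 * exp (z * zeta2) + zeta2 * exp (z * zeta3)) / 3"
  unfolding sfun_def sum_atLeastAtMost_1_3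
  by (simp add: zetas_def zeta1_def inverse_zeta2 inverse_zeta3)

lemma dfun_altdef: "dfun z = (exp z + zeta2 * exp (z * zeta2) + zeta3 * exp (z * zeta3)) / 3"
  unfolding dfun_def sum_atLeastAtMost_1_3
  by (simp add: zetas_def zeta1_def power2_eq_square zeta2_squared zeta3_squared
      inverse_zeta2 inverse_zeta3)

lemma cfun_rotate: "cfun (zeta2 * z) = cfun z"
  by (simp add: cfun_altdef zeta2_mult_zeta3 zeta2_squared algebra_simps
      flip: mult.assoc)

lemma sfun_rotate: "sfun (zeta2 * z) = zeta2 * sfun z"
  by (simp add: sfun_altdef algebra_simps zeta2_mult_zeta3 zeta2_squared zeta3_squared
      flip: mult.assoc)

lemma dfun_rotate: "dfun (zeta2 * z) = zeta3 * dfun z"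
  by (simp add: dfun_altdef algebra_simps zeta2_mult_zeta3 zeta2_squared zeta3_squared
      flip: mult.assoc)

definition Hphase :: "real \<Rightarrow> complex \<Rightarrow> complex" where
  "Hphase g z = exp (3/2 * z) + 2 * cos (complex_of_real (sqrt 3 / 2) * z + complex_of_real g)"

lemma Hphase_factor:
  "Hphase g z = exp (z/2) * (exp z + cis g * exp (z * zeta2) + cis (- g) * exp (z * zeta3))"
proof -
  let ?w = "\<i> * complex_of_real (sqrt 3 / 2) * z"
  have "exp (z/2) * exp z = exp (3/2 * z)"
    "exp (z/2) * exp (z * zeta2) = exp ?w"
    "exp (z/2) * exp (z * zeta3) = exp (- ?w)"
    by (simp_all add: zeta2_def zeta3_def algebra_simps flip: exp_add)
  moreover have "2 * cos (complex_of_real (sqrt 3 / 2) * z + complex_of_real g)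
      = exp ?w * cis g + exp (- ?w) * cis (- g)"
    by (simp add: cos_exp_eq cis_conv_exp algebra_simps flip: exp_add)
  ultimately show ?thesis
    by (simp add: Hphase_def algebra_simps)
qed

lemma cfun_conv_Hphase: "3 * exp (z/2) * cfun z = Hphase 0 z"
  by (simp add: Hphase_factor cfun_altdef)

lemma sfun_conv_Hphase: "3 * exp (z/2) * sfun z = Hphase (- (2*pi/3)) z"
  by (simp add: Hphase_factor sfun_altdef cis_two_pi_thirds)

lemma dfun_conv_Hphase: "3 * exp (z/2) * dfun z = Hphase (2*pi/3) z"
  by (simp add: Hphase_factor dfun_altdef cis_two_pi_thirds)

lemma Hphase_of_neg_real: "Hphase g (- complex_of_real x) = complex_of_real (2 * Fphase g x)"
proof -
  have "complex_of_real (sqrt 3 / 2) * - complex_of_real x + complex_of_real g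
      = complex_of_real (- (sqrt 3 / 2 * x - g))"
    by simp
  moreover have "3/2 * - complex_of_real x = complex_of_real (- (3/2) * x)"
    by simp
  ultimately show ?thesis
    unfolding Hphase_def Fphase_def
    by (simp only: cos_of_real exp_of_real cos_minus) (simp add: algebra_simps)
qed

text \<open>These are the real and imaginary parts of \<open>Hphase g z = 0\<close> for \<open>z = X + \<i> Y\<close>, with
  \<open>E = exp (3 X / 2)\<close>, \<open>p = sqrt 3 X / 2 + g\<close> and \<open>q = sqrt 3 Y / 2\<close>.\<close>
lemma no_offaxis_solution:
  fixes E p q :: real
  assumes E: "0 < E" "E < 1" and "q \<noteq> 0"
    and re: "E * cos (sqrt 3 * q) + 2 * cos p * cosh q = 0"
    and im: "E * sin (sqrt 3 * q) = 2 * sin p * sinh q"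
  shows False
proof -
  have "2 * \<bar>cos p\<bar> \<le> 2 * \<bar>cos p\<bar> * cosh q"
    using cosh_real_ge_1[of q] by (simp add: mult_le_cancel_left1)
  also have "\<dots> = \<bar>2 * cos p * cosh q\<bar>"
    by (simp add: abs_mult)
  also have "\<dots> = \<bar>E * cos (sqrt 3 * q)\<bar>"
    using re by (simp only: add_eq_0_iff abs_minus_cancel)
  also have "\<dots> \<le> E"
    using E by (simp add: abs_mult mult_left_le)
  finally have "\<bar>cos p\<bar> < 1/2"
    using E by simp
  then have "\<bar>cos p\<bar> ^ 2 < (1/2) ^ 2"
    by (intro power_strict_mono) auto
  then have "4 * cos p ^ 2 < 1"
    by (simp add: power_divide)
  then have "3 < 4 * sin p ^ 2"
    using sin_cos_squared_add[of p] by linarith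
  then have "sqrt 3 ^ 2 < (2 * \<bar>sin p\<bar>) ^ 2"
    by (simp add: power_mult_distrib)
  then have sin_p: "sqrt 3 < 2 * \<bar>sin p\<bar>"
    by (rule power_less_imp_less_base) simp
  have sinh_q: "\<bar>q\<bar> \<le> \<bar>sinh q\<bar>" "0 < \<bar>sinh q\<bar>"
    using real_le_abs_sinh[of q] \<open>q \<noteq> 0\<close> by (simp_all add: sinh_field_def exp_minus)
  have "\<bar>E * sin (sqrt 3 * q)\<bar> \<le> E * (sqrt 3 * \<bar>q\<bar>)"
    using abs_sin_x_le_abs_x[of "sqrt 3 * q"] E by (simp add: abs_mult)
  also have "\<dots> < sqrt 3 * \<bar>q\<bar>"
    using E \<open>q \<noteq> 0\<close> by simp
  also have "\<dots> \<le> sqrt 3 * \<bar>sinh q\<bar>"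
    using sinh_q by simp
  also have "\<dots> < 2 * \<bar>sin p\<bar> * \<bar>sinh q\<bar>"
    using sin_p sinh_q by simp
  also have "\<dots> = \<bar>2 * sin p * sinh q\<bar>"
    by (simp add: abs_mult)
  finally show False
    using im by simp
qed

lemma Hphase_zero_left_half_plane:
  assumes "Re z < 0" "Hphase g z = 0"
  shows "Im z = 0"
proof (rule ccontr)
  assume "Im z \<noteq> 0"
  define E where "E = exp (3/2 * Re z)"
  define p where "p = sqrt 3 / 2 * Re z + g"
  define q where "q = sqrt 3 / 2 * Im z"
  have "3/2 * Im z = sqrt 3 * q"
    by (simp add: q_def)
  then have "Re (Hphase g z) = E * cos (sqrt 3 * q) + 2 * cos p * cosh q"
    "Im (Hphase g z) = E * sin (sqrt 3 * q) - 2 * sin p * sinh q"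
    by (simp_all add: Hphase_def Re_exp Im_exp Re_cos Im_cos cosh_field_def sinh_field_def
        E_def p_def q_def field_simps)
  moreover have "0 < E" "E < 1" "q \<noteq> 0"
    using assms(1) \<open>Im z \<noteq> 0\<close> by (simp_all add: E_def q_def)
  ultimately show False
    using no_offaxis_solution[of E q p] assms(2) by simp
qed

lemma rotate_to_left_half_plane:
  assumes "z \<noteq> 0"
  obtains j :: int where "j \<in> {-1, 0, 1}" "Re (zeta2 powi j * z) < 0"
proof -
  define s where "s = sqrt 3 / 2 * Im z"
  have "Re (zeta2 * z) = - Re z / 2 - s" "Re (zeta3 * z) = - Re z / 2 + s"
    by (simp_all add: zeta2_def zeta3_def s_def)
  moreover have "Re z \<noteq> 0 \<or> s \<noteq> 0"
    using assms by (auto simp: s_def complex_eq_iff)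
  ultimately have "Re z < 0 \<or> Re (zeta2 * z) < 0 \<or> Re (zeta3 * z) < 0"
    by auto
  then show ?thesis
    using that[of 0] that[of 1] that[of "-1", unfolded zeta2_powi_minus_one] by auto
qed

lemma eigenfunction_rotate_zero_iff:
  fixes f :: "complex \<Rightarrow> complex"
  assumes eigen: "\<And>z. f (zeta2 * z) = r * f z" and "r \<noteq> 0" and j: "j \<in> {-1, 0, 1}"
  shows "f (zeta2 powi j * z) = 0 \<longleftrightarrow> f z = 0"
proof -
  have rotate: "f (zeta2 * w) = 0 \<longleftrightarrow> f w = 0" for w
    using eigen \<open>r \<noteq> 0\<close> by simp
  have "zeta3 * z = zeta2 * (zeta2 * z)"
    by (simp add: zeta2_squared flip: mult.assoc)
  then have rotate3: "f (zeta3 * z) = 0 \<longleftrightarrow> f z = 0"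
    by (simp only: rotate)
  consider "zeta2 powi j = zeta3" | "zeta2 powi j = 1" | "zeta2 powi j = zeta2"
    using j zeta2_powi_minus_one by auto
  then show ?thesis
    using rotate3 rotate by cases simp_all
qed

lemma zero_on_three_rays:
  fixes f :: "complex \<Rightarrow> complex"
  assumes conv_Hphase: "\<And>z. 3 * exp (z/2) * f z = Hphase g z"
    and eigen: "\<And>z. f (zeta2 * z) = r * f z" and "r \<noteq> 0" and "f z = 0"
  obtains j x where "j \<in> {-1, 0, 1}" "0 \<le> x" "Fphase g x = 0"
    and "z = - (zeta2 powi j) * complex_of_real x"
proof (cases "z = 0")
  case True
  have "Hphase g (- complex_of_real 0) = 0"
    using conv_Hphase[of z] \<open>f z = 0\<close> True by simp
  then show thesis
    using that[of 0 0] True by (simp only: Hphase_of_neg_real) simp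
next
  case False
  then obtain i where i: "i \<in> {-1, 0, 1}" "Re (zeta2 powi i * z) < 0"
    by (rule rotate_to_left_half_plane)
  define w where "w = zeta2 powi i * z"
  have "f w = 0"
    using eigenfunction_rotate_zero_iff[where f = f, OF eigen \<open>r \<noteq> 0\<close> i(1)] \<open>f z = 0\<close>
    by (simp add: w_def)
  then have "Hphase g w = 0"
    by (simp flip: conv_Hphase)
  then have "Im w = 0"
    using Hphase_zero_left_half_plane i(2) w_def by blast
  then have w: "w = - complex_of_real (- Re w)"
    by (simp add: complex_eq_iff)
  with \<open>Hphase g w = 0\<close> have "Fphase g (- Re w) = 0"
    using Hphase_of_neg_real[of g "- Re w"] by simp
  moreover have "z = zeta2 powi (- i) * w"
    using zeta2_nonzero by (simp add: w_def power_int_minus)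
  moreover have "- i \<in> {-1, 0, 1}" "0 \<le> - Re w"
    using i by (auto simp: w_def)
  ultimately show thesis
    using that[of "- i" "- Re w"] w by simp
qed

lemma zeros_on_three_rays:
  fixes f :: "complex \<Rightarrow> complex" and h :: "nat \<Rightarrow> real"
  assumes conv_Hphase: "\<And>z. 3 * exp (z/2) * f z = Hphase g z"
    and eigen: "\<And>z. f (zeta2 * z) = r * f z" and "r \<noteq> 0"
    and roots: "h ` {1..} = {x. 0 \<le> x \<and> Fphase g x = 0}"
  shows "{z. f z = 0} = {- (zeta2 powi j) * complex_of_real (h k) | j k. j \<in> {-1, 0, 1} \<and> 1 \<le> k}"
proof (intro set_eqI iffI)
  fix z
  assume "z \<in> {z. f z = 0}"
  then obtain j x where "j \<in> {-1, 0, 1}" "0 \<le> x" "Fphase g x = 0"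
    and "z = - (zeta2 powi j) * complex_of_real x"
    using zero_on_three_rays[OF conv_Hphase eigen \<open>r \<noteq> 0\<close>] by blast
  moreover obtain k where "1 \<le> k" "h k = x"
    using roots \<open>0 \<le> x\<close> \<open>Fphase g x = 0\<close> by (metis (mono_tags) CollectI atLeast_iff imageE)
  ultimately show "z \<in> {- (zeta2 powi j) * complex_of_real (h k) | j k. j \<in> {-1, 0, 1} \<and> 1 \<le> k}"
    by blast
next
  fix z
  assume "z \<in> {- (zeta2 powi j) * complex_of_real (h k) | j k. j \<in> {-1, 0, 1} \<and> 1 \<le> k}"
  then obtain j k where j: "j \<in> {-1, 0, 1}" and "1 \<le> k"
    and z: "z = - (zeta2 powi j) * complex_of_real (h k)"
    by blast
  have "Fphase g (h k) = 0"
    using roots \<open>1 \<le> k\<close> by auto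
  then have "f (- complex_of_real (h k)) = 0"
    using conv_Hphase[of "- complex_of_real (h k)"] by (simp add: Hphase_of_neg_real)
  then have "f (zeta2 powi j * - complex_of_real (h k)) = 0"
    using eigenfunction_rotate_zero_iff[where f = f, OF eigen \<open>r \<noteq> 0\<close> j] by blast
  then show "z \<in> {z. f z = 0}"
    using z by simp
qed

lemma cfun_zeros:
  "{z. cfun z = 0} = {- (zeta2 powi j) * complex_of_real (c_root k) | j k. j \<in> {-1, 0, 1} \<and> 1 \<le> k}"
proof (rule zeros_on_three_rays[where f = cfun, OF cfun_conv_Hphase _ one_neq_zero])
  show "cfun (zeta2 * z) = 1 * cfun z" for z
    by (simp add: cfun_rotate)
  show "c_root ` {1..} = {x. 0 \<le> x \<and> Fphase 0 x = 0}"
    using c_root_image Fphase_at_0(1) by (auto simp: le_less)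
qed

lemma sfun_zeros:
  "{z. sfun z = 0} = {- (zeta2 powi j) * complex_of_real (s_root k) | j k. j \<in> {-1, 0, 1} \<and> 1 \<le> k}"
  by (rule zeros_on_three_rays[where f = sfun, OF sfun_conv_Hphase sfun_rotate zeta2_nonzero
        s_root_image])

lemma dfun_zeros:
  "{z. dfun z = 0} = {- (zeta2 powi j) * complex_of_real (d_root k) | j k. j \<in> {-1, 0, 1} \<and> 1 \<le> k}"
  by (rule zeros_on_three_rays[where f = dfun, OF dfun_conv_Hphase dfun_rotate zeta3_nonzero
        d_root_image])

theorem lemma1p2:
  shows "\<exists>xc xs xd :: nat \<Rightarrow> real.
    strict_mono_on {1..} xc \<and> strict_mono_on {1..} xs \<and> strict_mono_on {1..} xd \<and>
    0 < xc 1 \<and> xs 1 = 0 \<and> xd 1 = 0 \<and>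
    xc ` {1..} = {x. 0 < x \<and> Fc x = 0} \<and>
    xs ` {1..} = {x. 0 \<le> x \<and> Fs x = 0} \<and>
    xd ` {1..} = {x. 0 \<le> x \<and> Fd x = 0} \<and>
    {z. cfun z = 0} = {- (zeta2 powi j) * complex_of_real (xc k) | j k. j \<in> {-1, 0, 1} \<and> 1 \<le> k} \<and>
    {z. sfun z = 0} = {- (zeta2 powi j) * complex_of_real (xs k) | j k. j \<in> {-1, 0, 1} \<and> 1 \<le> k} \<and>
    {z. dfun z = 0} = {- (zeta2 powi j) * complex_of_real (xd k) | j k. j \<in> {-1, 0, 1} \<and> 1 \<le> k} \<and>
    (\<forall>x. 0 < x \<and> Fc x = 0 \<longrightarrow> deriv Fc x \<noteq> 0) \<and>
    (\<forall>x. 0 \<le> x \<and> Fs x = 0 \<longrightarrow> deriv Fs x \<noteq> 0) \<and>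
    (\<forall>x. 0 < x \<and> Fd x = 0 \<longrightarrow> deriv Fd x \<noteq> 0) \<and>
    (\<forall>k\<ge>1. xs k < xc k \<and> xc k < xs (Suc k)) \<and>
    (\<forall>k\<ge>1. xs k \<le> xd k \<and> xd k < xs (Suc k))"
proof -
  have "\<forall>x. 0 < x \<and> Fc x = 0 \<longrightarrow> deriv Fc x \<noteq> 0" "\<forall>x. 0 < x \<and> Fd x = 0 \<longrightarrow> deriv Fd x \<noteq> 0"
    using Fphase_root_simple by (simp_all add: Fc_eq_Fphase Fd_eq_Fphase)
  then show ?thesis
    using strict_mono_on_c_root strict_mono_on_s_root strict_mono_on_d_root c_root(4)[of 1] d_root_1
      c_root_image s_root_image d_root_image cfun_zeros sfun_zeros dfun_zeros Fs_root_simple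
      s_root_c_root_interlace s_root_d_root_interlace
    by (intro exI[of _ c_root] exI[of _ s_root] exI[of _ d_root])
      (simp add: s_root_def Fc_eq_Fphase Fs_eq_Fphase Fd_eq_Fphase)
qed

end
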